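(* For a selection $\mathtt{SEL}$ of the consistent set map, the chasing properties satisfy the implications (C) $\Rightarrow$ (A), (C) $\Rightarrow$ (D), (A) $\Rightarrow$ (B), and (D) $\Rightarrow$ (B); the reverse (and any other) implications between these properties do not hold in general.
   Context: $(\mathbb{T},\mathsf{K},d)$ is a compact parametrization of a set $\mathcal{F}$ of functions $\mathbb{N}\times\mathcal{X}\times\mathcal{U}\to\mathcal{X}$: $(\mathsf{K},d)$ compact metric, $\mathbb{T}:\mathsf{K}\to2^{\mathcal{F}}$, $\mathcal{F}\subseteq\bigcup_\theta\mathbb{T}[\theta]$. For a finite data set $\mathcal{D}$ of points $(t,x^+,x,u)$, $\mathsf{P}(\mathcal{D})$ is the closure of $\{\theta\in\mathsf{K}:\exists f\in\mathbb{T}[\theta],\ x^+=f(t,x,u)\ \forall(t,x^+,x,u)\in\mathcal{D}\}$; $\mathtt{SEL}$ is a selection if $\mathtt{SEL}[\mathcal{D}]\in\mathsf{P}(\mathcal{D})$. A property below holds for $\mathtt{SEL}$ if it holds for every data stream $\mathcal{D}_t=(d_1,\dots,d_t)$ for which some $f\in\mathcal{F}$ is consistent with all $\mathcal{D}_t$, with $\theta_t=\mathtt{SEL}[\mathcal{D}_t]$: (A) $\lim_t\theta_t$ exists; (B) $\lim_t d(\theta_t,\theta_{t-1})=0$; (C) ($\gamma$-competitive, some $\gamma$) $\sum_{t=t_1+1}^{t_2}d(\theta_t,\theta_{t-1})\le\gamma d_H(\mathsf{P}(\mathcal{D}_{t_2}),\mathsf{P}(\mathcal{D}_{t_1}))$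 for all $t_1<t_2$; (D) ($(\gamma,T)$-weakly competitive) the same inequality for all $t_1<t_2$ with $t_2-t_1\le T$. $d_H$ is the Hausdorff distance. *)

theory Defs
  imports "HOL-Analysis.Analysis"
begin

text \<open>Functions N x X x U -> X and data points (t, x+, x, u).\<close>
type_synonym ('x,'u) dynfun = "nat \<Rightarrow> 'x \<Rightarrow> 'u \<Rightarrow> 'x"
type_synonym ('x,'u) datum = "nat \<times> 'x \<times> 'x \<times> 'u"

definition hausdorff_dist :: "'a::metric_space set \<Rightarrow> 'a set \<Rightarrow> real" where
  "hausdorff_dist A B = max (SUP a\<in>A. infdist a B) (SUP b\<in>B. infdist b A)"

definition consistent :: "('x,'u) dynfun \<Rightarrow> ('x,'u) datum set \<Rightarrow> bool" where
  "consistent f D \<longleftrightarrow> (\<forall>(t,xp,x,u)\<in>D. xp = f t x u)"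

text \<open>(T, K, d) is a compact parametrization of F; the metric d is the one of the type 'k.\<close>
definition compact_parametrization ::
  "'k::metric_space set \<Rightarrow> ('k \<Rightarrow> ('x,'u) dynfun set) \<Rightarrow> ('x,'u) dynfun set \<Rightarrow> bool" where
  "compact_parametrization K T F \<longleftrightarrow>
     compact K \<and> (\<forall>\<theta>\<in>K. T \<theta> \<subseteq> F) \<and> F \<subseteq> (\<Union>\<theta>\<in>K. T \<theta>)"

definition consistent_set ::
  "'k::metric_space set \<Rightarrow> ('k \<Rightarrow> ('x,'u) dynfun set) \<Rightarrow> ('x,'u) datum set \<Rightarrow> 'k set" where
  "consistent_set K T D = closure {\<theta>\<in>K. \<exists>f\<in>T \<theta>. consistent f D}"

definition is_selection ::
  "'k::metric_space set \<Rightarrow> ('k \<Rightarrow> ('x,'u) dynfun set) \<Rightarrow> (('x,'u) datum set \<Rightarrow> 'k) \<Rightarrow> bool" where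
  "is_selection K T SEL \<longleftrightarrow>
     (\<forall>D. finite D \<and> consistent_set K T D \<noteq> {} \<longrightarrow> SEL D \<in> consistent_set K T D)"

definition stream_data :: "(nat \<Rightarrow> ('x,'u) datum) \<Rightarrow> nat \<Rightarrow> ('x,'u) datum set" where
  "stream_data d t = d ` {1..t}"

definition admissible_stream :: "('x,'u) dynfun set \<Rightarrow> (nat \<Rightarrow> ('x,'u) datum) \<Rightarrow> bool" where
  "admissible_stream F d \<longleftrightarrow> (\<exists>f\<in>F. \<forall>t. consistent f (stream_data d t))"

definition chase_A where
  "chase_A K T F SEL \<longleftrightarrow> (\<forall>d. admissible_stream F d \<longrightarrow>
      convergent (\<lambda>t. SEL (stream_data d t) :: 'k::metric_space))"

definition chase_B where
  "chase_B K T F SEL \<longleftrightarrow> (\<forall>d. admissible_stream F d \<longrightarrow>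
      (\<lambda>t. dist (SEL (stream_data d (Suc t))) (SEL (stream_data d t) :: 'k::metric_space))
        \<longlonglongrightarrow> 0)"

definition competitive_ineq ::
  "'k::metric_space set \<Rightarrow> ('k \<Rightarrow> ('x,'u) dynfun set) \<Rightarrow> (('x,'u) datum set \<Rightarrow> 'k)
     \<Rightarrow> real \<Rightarrow> (nat \<Rightarrow> ('x,'u) datum) \<Rightarrow> nat \<Rightarrow> nat \<Rightarrow> bool" where
  "competitive_ineq K T SEL \<gamma> d t1 t2 \<longleftrightarrow>
     (\<Sum>t\<in>{t1<..t2}. dist (SEL (stream_data d t)) (SEL (stream_data d (t - 1))))
       \<le> \<gamma> * hausdorff_dist (consistent_set K T (stream_data d t2)) (consistent_set K T (stream_data d t1))"

definition chase_C where
  "chase_C K T F SEL \<longleftrightarrow> (\<exists>\<gamma>. \<forall>d. admissible_stream F d \<longrightarrow>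
      (\<forall>t1 t2. t1 < t2 \<longrightarrow> competitive_ineq K T SEL \<gamma> d t1 t2))"

definition chase_D where
  "chase_D K T F SEL \<longleftrightarrow> (\<exists>\<gamma> (N::nat). N \<ge> 1 \<and> (\<forall>d. admissible_stream F d \<longrightarrow>
      (\<forall>t1 t2. t1 < t2 \<and> t2 - t1 \<le> N \<longrightarrow> competitive_ineq K T SEL \<gamma> d t1 t2)))"

end

theory Submission
  imports Defs "HOL-Library.Log_Nat"
begin

text \<open>
  Under (C) the total movement of the selection is at most gamma times the diameter of K, so the
  selected parameters form a Cauchy sequence in the compact set K. Under (D) every single step is
  at most gamma times the Hausdorff distance between consecutive consistent sets; these form a
  nested sequence of nonempty compact sets, and consecutive members of such a sequence become
  Hausdorff close. (A) implies (B) and (C) implies (D) directly.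

  A selection that jumps once while the consistent set stays fixed satisfies (A) but not (D).
  Conversely, let the parameter space consist of an interval far away and of countably many
  isolated points that leave the consistent set one at a time, each removal moving the consistent
  set by some weight w in the Hausdorff distance, with divergent total weight; dyadic points in
  blocks of shrinking scale, removed from the finest to the coarsest, do this. A selection that
  stays in the far interval and follows a cosine wave in the accumulated weight moves by at most
  2 w per removal, so it satisfies (D) with gamma = 2, yet it oscillates forever and (A) fails.
  All other non-implications follow from these two examples and the implications.
\<close>

section \<open>Hausdorff distance\<close>

lemma infdist_le_diameter:
  assumes "bounded K" "a \<in> K" "B \<subseteq> K" "B \<noteq> {}"
  shows "infdist a B \<le> diameter K"
proof -
  obtain b where "b \<in> B" using assms(4) by blast
  then have "infdist a B \<le> dist a b" by (rule infdist_le)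
  also have "\<dots> \<le> diameter K" using assms \<open>b \<in> B\<close> by (intro diameter_bounded_bound) auto
  finally show ?thesis .
qed

lemma infdist_ge:
  assumes "A \<noteq> {}" "\<And>y. y \<in> A \<Longrightarrow> e \<le> dist x y"
  shows "e \<le> infdist x A"
  unfolding infdist_notempty[OF assms(1)] using assms by (auto intro: cINF_greatest)

lemma hausdorff_dist_ge_infdist:
  assumes "bounded B" "A \<noteq> {}" "b \<in> B"
  shows "infdist b A \<le> hausdorff_dist A B"
proof -
  obtain a where "a \<in> A" using assms(2) by blast
  obtain e where e: "\<And>y. y \<in> B \<Longrightarrow> dist a y \<le> e"
    using assms(1) bounded_any_center by blast
  have "infdist y A \<le> e" if "y \<in> B" for y
    using infdist_le2[OF \<open>a \<in> A\<close>, of y e] e[OF that] by (simp add: dist_commute)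
  then have "bdd_above ((\<lambda>y. infdist y A) ` B)" by (rule bdd_aboveI2)
  then have "infdist b A \<le> (SUP y\<in>B. infdist y A)" by (rule cSUP_upper[OF assms(3)])
  then show ?thesis unfolding hausdorff_dist_def by simp
qed

lemma hausdorff_dist_nonneg:
  assumes "bounded B" "A \<noteq> {}" "B \<noteq> {}"
  shows "0 \<le> hausdorff_dist A B"
proof -
  obtain b where "b \<in> B" using assms(3) by blast
  then show ?thesis using hausdorff_dist_ge_infdist[OF assms(1,2)] infdist_nonneg[of b A] by force
qed

lemma hausdorff_dist_le:
  assumes "A \<noteq> {}" "B \<noteq> {}"
    and "\<And>a. a \<in> A \<Longrightarrow> infdist a B \<le> e" "\<And>b. b \<in> B \<Longrightarrow> infdist b A \<le> e"
  shows "hausdorff_dist A B \<le> e"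
  unfolding hausdorff_dist_def using assms by (auto intro!: cSUP_least)

lemma hausdorff_dist_le_diameter:
  assumes "bounded K" "A \<subseteq> K" "B \<subseteq> K" "A \<noteq> {}" "B \<noteq> {}"
  shows "hausdorff_dist A B \<le> diameter K"
  using assms by (intro hausdorff_dist_le infdist_le_diameter) auto

lemma hausdorff_dist_refl:
  assumes "bounded A" "A \<noteq> {}"
  shows "hausdorff_dist A A = 0"
  using hausdorff_dist_le[OF assms(2,2), of 0] hausdorff_dist_nonneg[OF assms(1,2,2)] by simp

lemma decseq_compact_Inter_nonempty:
  fixes C :: "nat \<Rightarrow> 'a::metric_space set"
  assumes "\<And>t. compact (C t)" "\<And>t. C t \<noteq> {}" "decseq C"
  shows "\<Inter>(range C) \<noteq> {}"
proof -
  have "C 0 \<inter> \<Inter>(range C) \<noteq> {}"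
  proof (rule compact_imp_fip[OF assms(1)])
    show "closed S" if "S \<in> range C" for S using that assms(1) compact_imp_closed by blast
    fix \<F> assume "finite \<F>" "\<F> \<subseteq> range C"
    then obtain I where I: "finite I" "\<F> = C ` I" by (meson finite_subset_image)
    define m where "m = Max (insert 0 I)"
    have "C m \<subseteq> C i" if "i \<in> insert 0 I" for i
      using decseqD[OF assms(3)] Max_ge[of "insert 0 I" i] I(1) that unfolding m_def by simp
    then show "C 0 \<inter> \<Inter>\<F> \<noteq> {}" using assms(2)[of m] I(2) by blast
  qed
  then show ?thesis by blast
qed

lemma decseq_compact_hausdorff_dist_Suc_tendsto_0:
  fixes P :: "nat \<Rightarrow> 'a::metric_space set"
  assumes compact: "\<And>t. compact (P t)" and nonempty: "\<And>t. P t \<noteq> {}" and dec: "decseq P"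
  shows "(\<lambda>t. hausdorff_dist (P (Suc t)) (P t)) \<longlonglongrightarrow> 0"
proof (rule order_tendstoI)
  have "0 \<le> hausdorff_dist (P (Suc t)) (P t)" for t
    by (rule hausdorff_dist_nonneg[OF compact_imp_bounded[OF compact] nonempty nonempty])
  then show "\<forall>\<^sub>F t in sequentially. a < hausdorff_dist (P (Suc t)) (P t)" if "a < 0" for a
    using that by (intro always_eventually allI) (rule less_le_trans)
next
  fix e :: real assume "0 < e"
  define P_lim where "P_lim = \<Inter>(range P)"
  have "P_lim \<noteq> {}" unfolding P_lim_def by (rule decseq_compact_Inter_nonempty[OF assms])
  define C where "C t = P t \<inter> {x. e / 2 \<le> infdist x P_lim}" for t
  \<comment> \<open>Compact, nested and with empty intersection, hence eventually empty: then every point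
    of P t is e/2-close to P_lim, which lies inside P (Suc t).\<close>
  have "\<exists>M. C M = {}"
  proof (rule ccontr)
    assume "\<nexists>M. C M = {}"
    moreover have "compact (C t)" for t
      unfolding C_def by (intro compact_Int_closed compact closed_Collect_le continuous_intros)
    moreover have "decseq C" using dec unfolding decseq_def C_def by blast
    ultimately obtain x where "\<And>t. x \<in> C t" using decseq_compact_Inter_nonempty[of C] by blast
    then have "x \<in> P_lim" "e / 2 \<le> infdist x P_lim" unfolding C_def P_lim_def by blast+
    with \<open>0 < e\<close> show False by simp
  qed
  then obtain M where "C M = {}" by blast
  have "hausdorff_dist (P (Suc t)) (P t) < e" if "M \<le> t" for t
  proof -
    have "hausdorff_dist (P (Suc t)) (P t) \<le> e / 2"
    proof (rule hausdorff_dist_le[OF nonempty nonempty])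
      fix a assume "a \<in> P (Suc t)"
      then have "a \<in> P t" using dec unfolding decseq_Suc_iff by blast
      then show "infdist a (P t) \<le> e / 2" using \<open>0 < e\<close> by simp
    next
      fix b assume "b \<in> P t"
      then have "b \<in> P M" using dec \<open>M \<le> t\<close> unfolding decseq_def by blast
      then have "infdist b P_lim < e / 2" using \<open>C M = {}\<close> unfolding C_def by auto
      moreover have "infdist b (P (Suc t)) \<le> infdist b P_lim"
        using \<open>P_lim \<noteq> {}\<close> unfolding P_lim_def by (intro infdist_mono) auto
      ultimately show "infdist b (P (Suc t)) \<le> e / 2" by simp
    qed
    with \<open>0 < e\<close> show ?thesis by simp
  qed
  then show "\<forall>\<^sub>F t in sequentially. hausdorff_dist (P (Suc t)) (P t) < e"
    unfolding eventually_sequentially by blast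
qed

section \<open>The implications\<close>

lemma dist_le_sum_dist_Suc:
  fixes \<theta> :: "nat \<Rightarrow> 'a::metric_space"
  assumes "m \<le> n"
  shows "dist (\<theta> m) (\<theta> n) \<le> (\<Sum>i\<in>{m..<n}. dist (\<theta> (Suc i)) (\<theta> i))"
  using assms
proof (induction n rule: dec_induct)
  case (step n)
  have "dist (\<theta> m) (\<theta> (Suc n)) \<le> dist (\<theta> m) (\<theta> n) + dist (\<theta> (Suc n)) (\<theta> n)"
    by (rule dist_triangle2)
  with step.IH step.hyps show ?case by simp
qed simp

lemma Cauchy_if_sum_dist_Suc_bounded:
  fixes \<theta> :: "nat \<Rightarrow> 'a::metric_space"
  assumes "\<And>n. (\<Sum>i<n. dist (\<theta> (Suc i)) (\<theta> i)) \<le> B"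
  shows "Cauchy \<theta>"
proof (rule metric_CauchyI)
  fix e :: real assume "0 < e"
  have "summable (\<lambda>i. dist (\<theta> (Suc i)) (\<theta> i))"
    by (rule summableI_nonneg_bounded[OF _ assms]) simp
  with \<open>0 < e\<close> obtain N
    where N: "\<And>m n. N \<le> m \<Longrightarrow> norm (\<Sum>i\<in>{m..<n}. dist (\<theta> (Suc i)) (\<theta> i)) < e"
    unfolding summable_Cauchy by blast
  have ordered: "dist (\<theta> m) (\<theta> n) < e" if "N \<le> m" "m \<le> n" for m n
    using dist_le_sum_dist_Suc[OF that(2), of \<theta>] N[OF that(1), of n] by simp
  have "dist (\<theta> m) (\<theta> n) < e" if "N \<le> m" "N \<le> n" for m n
    using ordered[of m n] ordered[of n m] that by (cases "m \<le> n") (auto simp: dist_commute)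
  then show "\<exists>M. \<forall>m\<ge>M. \<forall>n\<ge>M. dist (\<theta> m) (\<theta> n) < e" by blast
qed

lemma sum_greaterThanAtMost_shift:
  "(\<Sum>t\<in>{m<..n}. f t) = (\<Sum>i\<in>{m..<n}. f (Suc i :: nat))"
proof -
  have "{m<..n} = {Suc m..<Suc n}" by auto
  then show ?thesis by (simp only: sum.atLeast_Suc_lessThan_Suc_shift comp_def)
qed

lemma competitive_ineq_iff:
  "competitive_ineq K T SEL \<gamma> d t1 t2 \<longleftrightarrow>
     (\<Sum>i\<in>{t1..<t2}. dist (SEL (stream_data d (Suc i))) (SEL (stream_data d i)))
       \<le> \<gamma> * hausdorff_dist (consistent_set K T (stream_data d t2)) (consistent_set K T (stream_data d t1))"
  unfolding competitive_ineq_def sum_greaterThanAtMost_shift by simp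

lemma consistent_set_subset:
  assumes "compact K"
  shows "consistent_set K T D \<subseteq> K"
  unfolding consistent_set_def
  by (rule closure_minimal) (auto intro: compact_imp_closed[OF assms])

lemma compact_consistent_set:
  assumes "compact K"
  shows "compact (consistent_set K T D)"
proof -
  have "consistent_set K T D = K \<inter> consistent_set K T D"
    using consistent_set_subset[OF assms] by blast
  also have "compact \<dots>"
    unfolding consistent_set_def by (rule compact_Int_closed[OF assms closed_closure])
  finally show ?thesis .
qed

lemma consistent_set_antimono:
  assumes "D \<subseteq> D'"
  shows "consistent_set K T D' \<subseteq> consistent_set K T D"
  unfolding consistent_set_def consistent_def
  by (rule closure_mono) (use assms in blast)

lemma stream_data_mono: "t \<le> t' \<Longrightarrow> stream_data d t \<subseteq> stream_data d t'"
  unfolding stream_data_def by auto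

lemma finite_stream_data: "finite (stream_data d t)"
  unfolding stream_data_def by simp

lemma stream_data_Suc: "stream_data d (Suc t) = insert (d (Suc t)) (stream_data d t)"
  unfolding stream_data_def by (auto simp: atLeastAtMostSuc_conv)

lemma admissible_stream_common_parameter:
  assumes "compact_parametrization K T F" "admissible_stream F d"
  obtains \<theta> where "\<theta> \<in> K" "\<And>t. \<theta> \<in> consistent_set K T (stream_data d t)"
proof -
  from assms(2) obtain f where f: "f \<in> F" "\<And>t. consistent f (stream_data d t)"
    unfolding admissible_stream_def by blast
  from assms(1) f(1) obtain \<theta> where "\<theta> \<in> K" "f \<in> T \<theta>"
    unfolding compact_parametrization_def by blast
  then have "\<theta> \<in> consistent_set K T (stream_data d t)" for t
    unfolding consistent_set_def using f(2) by (auto intro: closure_subset[THEN subsetD])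
  with \<open>\<theta> \<in> K\<close> show thesis by (rule that)
qed

lemma consistent_sets_of_admissible_stream:
  assumes "compact_parametrization K T F" "admissible_stream F d"
  defines "P \<equiv> \<lambda>t. consistent_set K T (stream_data d t)"
  shows "compact K" "\<And>t. P t \<subseteq> K" "\<And>t. compact (P t)" "\<And>t. P t \<noteq> {}" "decseq P"
proof -
  show "compact K" using assms(1) unfolding compact_parametrization_def by simp
  then show "P t \<subseteq> K" "compact (P t)" for t
    unfolding P_def by (simp_all add: consistent_set_subset compact_consistent_set)
  show "P t \<noteq> {}" for t
    using admissible_stream_common_parameter[OF assms(1,2)] unfolding P_def by blast
  show "decseq P"
    unfolding decseq_def P_def by (auto intro!: consistent_set_antimono stream_data_mono)
qed

lemma selection_in_consistent_set:
  assumes "compact_parametrization K T F" "admissible_stream F d" "is_selection K T SEL"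
  shows "SEL (stream_data d t) \<in> consistent_set K T (stream_data d t)"
  using assms(3) consistent_sets_of_admissible_stream(4)[OF assms(1,2)] finite_stream_data
  unfolding is_selection_def by blast

lemma chase_C_imp_A:
  assumes cp: "compact_parametrization K T F" and sel: "is_selection K T SEL"
    and C: "chase_C K T F SEL"
  shows "chase_A K T F SEL"
  unfolding chase_A_def
proof (intro allI impI)
  fix d assume adm: "admissible_stream F d"
  from C adm obtain \<gamma> where comp: "\<And>t1 t2. t1 < t2 \<Longrightarrow> competitive_ineq K T SEL \<gamma> d t1 t2"
    unfolding chase_C_def by blast
  define \<theta> where "\<theta> = (\<lambda>t. SEL (stream_data d t))"
  define P where "P t = consistent_set K T (stream_data d t)" for t
  note P = consistent_sets_of_admissible_stream[OF cp adm, folded P_def]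
  have "bounded K" using P(1) by (rule compact_imp_bounded)
  have "(\<Sum>i<n. dist (\<theta> (Suc i)) (\<theta> i)) \<le> \<bar>\<gamma>\<bar> * diameter K" for n
  proof (cases "n = 0")
    case True
    then show ?thesis using diameter_ge_0[OF \<open>bounded K\<close>] by simp
  next
    case False
    have "(\<Sum>i<n. dist (\<theta> (Suc i)) (\<theta> i)) \<le> \<gamma> * hausdorff_dist (P n) (P 0)"
      using comp[of 0 n] False unfolding competitive_ineq_iff \<theta>_def P_def by (simp add: atLeast0LessThan)
    also have "\<dots> \<le> \<bar>\<gamma>\<bar> * diameter K"
    proof (rule mult_mono)
      show "0 \<le> hausdorff_dist (P n) (P 0)"
        using hausdorff_dist_nonneg[OF bounded_subset[OF \<open>bounded K\<close> P(2)] P(4) P(4)] .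
      show "hausdorff_dist (P n) (P 0) \<le> diameter K"
        using hausdorff_dist_le_diameter[OF \<open>bounded K\<close> P(2) P(2) P(4) P(4)] .
    qed simp_all
    finally show ?thesis .
  qed
  then have "Cauchy \<theta>" by (rule Cauchy_if_sum_dist_Suc_bounded)
  moreover have "\<theta> t \<in> K" for t
    using selection_in_consistent_set[OF cp adm sel] P(2) unfolding \<theta>_def P_def by blast
  moreover have "complete K" using P(1) by (rule compact_imp_complete)
  ultimately have "\<exists>l\<in>K. \<theta> \<longlonglongrightarrow> l" unfolding complete_def by blast
  then show "convergent (\<lambda>t. SEL (stream_data d t))" unfolding convergent_def \<theta>_def by blast
qed

lemma chase_C_imp_D: "chase_C K T F SEL \<Longrightarrow> chase_D K T F SEL"
  unfolding chase_C_def chase_D_def by (meson order_refl)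

lemma chase_A_imp_B:
  assumes "chase_A K T F SEL"
  shows "chase_B K T F SEL"
  unfolding chase_B_def
proof (intro allI impI)
  fix d assume "admissible_stream F d"
  with assms obtain l where l: "(\<lambda>t. SEL (stream_data d t)) \<longlonglongrightarrow> l"
    unfolding chase_A_def convergent_def by blast
  have "(\<lambda>t. dist (SEL (stream_data d (Suc t))) (SEL (stream_data d t))) \<longlonglongrightarrow> dist l l"
    by (intro tendsto_dist LIMSEQ_Suc l)
  then show "(\<lambda>t. dist (SEL (stream_data d (Suc t))) (SEL (stream_data d t))) \<longlonglongrightarrow> 0" by simp
qed

lemma chase_D_imp_B:
  assumes cp: "compact_parametrization K T F" and D: "chase_D K T F SEL"
  shows "chase_B K T F SEL"
  unfolding chase_B_def
proof (intro allI impI)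
  fix d assume adm: "admissible_stream F d"
  from D adm obtain \<gamma> N where "1 \<le> N"
    and comp: "\<And>t1 t2. t1 < t2 \<Longrightarrow> t2 - t1 \<le> N \<Longrightarrow> competitive_ineq K T SEL \<gamma> d t1 t2"
    unfolding chase_D_def by blast
  define P where "P t = consistent_set K T (stream_data d t)" for t
  define h where "h t = hausdorff_dist (P (Suc t)) (P t)" for t
  note P = consistent_sets_of_admissible_stream[OF cp adm, folded P_def]
  have "h \<longlonglongrightarrow> 0"
    unfolding h_def by (rule decseq_compact_hausdorff_dist_Suc_tendsto_0[OF P(3-5)])
  then have lim: "(\<lambda>t. \<bar>\<gamma>\<bar> * h t) \<longlonglongrightarrow> 0"
    by (rule tendsto_mult_right_zero)
  have bound: "norm (dist (SEL (stream_data d (Suc t))) (SEL (stream_data d t))) \<le> \<bar>\<gamma>\<bar> * h t" for t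
  proof -
    have "dist (SEL (stream_data d (Suc t))) (SEL (stream_data d t)) \<le> \<gamma> * h t"
      using comp[of t "Suc t"] \<open>1 \<le> N\<close> unfolding competitive_ineq_iff h_def P_def by simp
    also have "\<dots> \<le> \<bar>\<gamma>\<bar> * h t"
      using hausdorff_dist_nonneg[OF compact_imp_bounded[OF P(3)] P(4) P(4)] unfolding h_def
      by (intro mult_right_mono) auto
    finally show ?thesis by simp
  qed
  show "(\<lambda>t. dist (SEL (stream_data d (Suc t))) (SEL (stream_data d t))) \<longlonglongrightarrow> 0"
    by (intro Lim_null_comparison[OF _ lim] always_eventually allI bound)
qed

section \<open>A selection with (A) but not (D)\<close>

lemma exists_selection_A_B_not_C_D:
  "\<exists>(K::real set) (T::real \<Rightarrow> (real,real) dynfun set) F SEL.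
     compact_parametrization K T F \<and> is_selection K T SEL \<and>
     chase_A K T F SEL \<and> chase_B K T F SEL \<and> \<not> chase_C K T F SEL \<and> \<not> chase_D K T F SEL"
proof -
  define f\<^sub>0 :: "(real,real) dynfun" where "f\<^sub>0 = (\<lambda>t x u. 0)"
  define K :: "real set" where "K = {0, 1}"
  define T :: "real \<Rightarrow> (real,real) dynfun set" where "T = (\<lambda>_. {f\<^sub>0})"
  define SEL :: "(real,real) datum set \<Rightarrow> real" where "SEL = (\<lambda>D. if D = {} then 0 else 1)"
  \<comment> \<open>The selection jumps once, when the first datum arrives, while the consistent set stays K.\<close>
  have P: "consistent_set K T D = (if consistent f\<^sub>0 D then K else {})" for D
  proof -
    have "{\<theta> \<in> K. \<exists>f\<in>T \<theta>. consistent f D} = (if consistent f\<^sub>0 D then K else {})"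
      unfolding T_def by auto
    moreover have "closed K" unfolding K_def by (intro finite_imp_closed) simp
    ultimately show ?thesis unfolding consistent_set_def by simp
  qed
  have cp: "compact_parametrization K T {f\<^sub>0}"
    unfolding compact_parametrization_def K_def T_def by auto
  have sel: "is_selection K T SEL"
    unfolding is_selection_def P by (auto simp: SEL_def K_def)
  have A: "chase_A K T {f\<^sub>0} SEL"
    unfolding chase_A_def
  proof (intro allI impI)
    fix d :: "nat \<Rightarrow> (real, real) datum"
    have "SEL (stream_data d t) = 1" if "1 \<le> t" for t
      using that unfolding SEL_def stream_data_def by auto
    then have "(\<lambda>t. SEL (stream_data d t)) \<longlonglongrightarrow> 1"
      by (intro tendsto_eventually) (auto simp: eventually_sequentially)
    then show "convergent (\<lambda>t. SEL (stream_data d t))" unfolding convergent_def by blast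
  qed
  have not_D: "\<not> chase_D K T {f\<^sub>0} SEL"
  proof
    assume "chase_D K T {f\<^sub>0} SEL"
    then obtain \<gamma> N where "1 \<le> N" and comp: "\<And>d. admissible_stream {f\<^sub>0} d \<Longrightarrow>
        \<forall>t1 t2. t1 < t2 \<and> t2 - t1 \<le> N \<longrightarrow> competitive_ineq K T SEL \<gamma> d t1 t2"
      unfolding chase_D_def by blast
    define d :: "nat \<Rightarrow> (real, real) datum" where "d = (\<lambda>_. (0, 0, 0, 0))"
    have "consistent f\<^sub>0 (stream_data d t)" for t
      unfolding consistent_def f\<^sub>0_def d_def stream_data_def by auto
    then have adm: "admissible_stream {f\<^sub>0} d" and "consistent_set K T (stream_data d t) = K" for t
      unfolding admissible_stream_def P by auto
    moreover have "hausdorff_dist K K = 0" by (rule hausdorff_dist_refl) (auto simp: K_def)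
    moreover have "competitive_ineq K T SEL \<gamma> d 0 1" using comp[OF adm] \<open>1 \<le> N\<close> by simp
    ultimately have "dist (SEL (stream_data d 1)) (SEL (stream_data d 0)) \<le> 0"
      unfolding competitive_ineq_iff by simp
    then show False unfolding SEL_def stream_data_def by simp
  qed
  have "chase_B K T {f\<^sub>0} SEL" by (rule chase_A_imp_B[OF A])
  moreover have "\<not> chase_C K T {f\<^sub>0} SEL" using chase_C_imp_D not_D by blast
  ultimately show ?thesis using cp sel A not_D by blast
qed

section \<open>Removal schedules: selections with (D) but not (A)\<close>

definition wave :: "real \<Rightarrow> real" where
  "wave x = 10 + (1 - cos (pi * x)) / 2"

lemma wave_range: "wave x \<in> {10..11}"
  unfolding wave_def using cos_ge_minus_one[of "pi * x"] cos_le_one[of "pi * x"] by auto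

lemma abs_cos_diff_le:
  fixes x y :: real
  shows "\<bar>cos x - cos y\<bar> \<le> \<bar>x - y\<bar>"
proof -
  have "\<bar>cos x - cos y\<bar> = 2 * \<bar>sin ((x + y) / 2)\<bar> * \<bar>sin ((y - x) / 2)\<bar>"
    by (simp add: cos_diff_cos abs_mult)
  also have "\<dots> \<le> 2 * 1 * \<bar>(y - x) / 2\<bar>"
    by (intro mult_mono abs_sin_x_le_abs_x) auto
  finally show ?thesis by simp
qed

lemma wave_lipschitz: "dist (wave x) (wave y) \<le> 2 * dist x y"
proof -
  have diff: "wave x - wave y = (cos (pi * y) - cos (pi * x)) / 2"
    unfolding wave_def by (simp add: field_simps)
  have "dist (wave x) (wave y) = \<bar>cos (pi * y) - cos (pi * x)\<bar> / 2"
    unfolding dist_real_def diff by simp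
  also have "\<dots> \<le> pi * \<bar>x - y\<bar> / 2"
    using abs_cos_diff_le[of "pi * y" "pi * x"]
    by (simp add: abs_mult abs_minus_commute right_diff_distrib[symmetric])
  also have "\<dots> \<le> 2 * dist x y"
    using pi_less_4 by (simp add: dist_real_def mult_right_mono)
  finally show ?thesis .
qed

lemma wave_of_nat: "wave (real k) = (if even k then 10 else 11)"
  unfolding wave_def by simp

definition zero_on :: "nat set \<Rightarrow> (real, real) dynfun" where
  "zero_on A = (\<lambda>t x u. if t \<in> A then 0 else 1)"

definition zero_times :: "(real, real) datum set \<Rightarrow> nat set" where
  "zero_times D = {t. \<exists>x u. (t, 0, x, u) \<in> D}"

lemma finite_zero_times: "finite D \<Longrightarrow> finite (zero_times D)"
  by (rule finite_subset[of _ "fst ` D"]) (force simp: zero_times_def)+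

lemma zero_times_subset: "consistent (zero_on A) D \<Longrightarrow> zero_times D \<subseteq> A"
  unfolding consistent_def zero_times_def zero_on_def by (force split: if_splits)

lemma consistent_zero_on_zero_times:
  assumes "consistent (zero_on A) D"
  shows "consistent (zero_on (zero_times D)) D"
  unfolding consistent_def
proof clarify
  fix t y x u assume D: "(t, y, x, u) \<in> D"
  then have y: "y = (if t \<in> A then 0 else 1)"
    using assms unfolding consistent_def zero_on_def by fastforce
  have "t \<in> zero_times D \<longleftrightarrow> t \<in> A"
  proof
    assume "t \<in> zero_times D"
    then obtain x' u' where "(t, 0, x', u') \<in> D" unfolding zero_times_def by blast
    then show "t \<in> A" using assms unfolding consistent_def zero_on_def by (fastforce split: if_splits)
  next
    assume "t \<in> A"
    then show "t \<in> zero_times D" using D y unfolding zero_times_def by auto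
  qed
  then show "y = zero_on (zero_times D) t x u" using y unfolding zero_on_def by simp
qed

lemma zero_times_insert:
  "zero_times (insert (t, y, x, u) D) = (if y = 0 then insert t (zero_times D) else zero_times D)"
  unfolding zero_times_def by auto

lemma card_zero_times_stream_data_Suc:
  "card (zero_times (stream_data d (Suc t))) \<in>
     {card (zero_times (stream_data d t)), Suc (card (zero_times (stream_data d t)))}"
proof -
  obtain t' y x u where d: "d (Suc t) = (t', y, x, u)" by (cases "d (Suc t)")
  show ?thesis
    using finite_zero_times[OF finite_stream_data, of d t]
    unfolding stream_data_Suc d zero_times_insert by (auto simp: card_insert_if)
qed

text \<open>
  The removable point p i admits only models zero_on A with at most c i zero times, so it leaves
  the consistent set when the (c i + 1)-st zero output is observed; by separated it is then at
  distance at least w i from every point still present. The far interval 10..11 admits all models.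
\<close>

locale removal_schedule =
  fixes I :: "'i set" and p :: "'i \<Rightarrow> real" and w :: "'i \<Rightarrow> real" and c :: "'i \<Rightarrow> nat"
  assumes inj_c: "inj_on c I"
    and w_pos: "\<And>i. i \<in> I \<Longrightarrow> 0 < w i"
    and w_le_1: "\<And>i. i \<in> I \<Longrightarrow> w i \<le> 1"
    and p_range: "\<And>i. i \<in> I \<Longrightarrow> p i \<in> {0..2}"
    and separated: "\<And>i i'. i \<in> I \<Longrightarrow> i' \<in> I \<Longrightarrow> c i < c i' \<Longrightarrow> w i \<le> dist (p i) (p i')"
    and mass_hits_naturals: "\<And>k. \<exists>n\<ge>k. (\<Sum>i | i \<in> I \<and> c i < n. w i) = real k"
begin

definition removed :: "nat \<Rightarrow> 'i set" where
  "removed n = {i \<in> I. c i < n}"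

definition mass :: "nat \<Rightarrow> real" where
  "mass n = (\<Sum>i\<in>removed n. w i)"

definition points :: "real set" where
  "points = {10..11} \<union> p ` I"

definition models :: "real \<Rightarrow> (real, real) dynfun set" where
  "models \<theta> = {zero_on A | A. \<forall>i\<in>I. \<theta> = p i \<longrightarrow> finite A \<and> card A \<le> c i}"

definition family :: "(real, real) dynfun set" where
  "family = (\<Union>\<theta>\<in>closure points. models \<theta>)"

\<comment> \<open>The SOME branch is never taken on admissible streams, see select_eq.\<close>
definition select :: "(real, real) datum set \<Rightarrow> real" where
  "select D =
    (if wave (mass (card (zero_times D))) \<in> consistent_set (closure points) models D
     then wave (mass (card (zero_times D)))
     else (SOME \<theta>. \<theta> \<in> consistent_set (closure points) models D))"

lemma finite_removed: "finite (removed n)"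
proof (rule inj_on_finite[OF _ _ finite_lessThan])
  show "inj_on c (removed n)" using inj_c unfolding removed_def by (rule inj_on_subset) auto
  show "c ` removed n \<subseteq> {..<n}" unfolding removed_def by auto
qed

lemma mass_Suc_removal:
  assumes "i \<in> I" "c i = n"
  shows "mass (Suc n) = mass n + w i"
proof -
  have "removed (Suc n) = insert i (removed n)"
    using assms inj_onD[OF inj_c] unfolding removed_def by (auto simp: less_Suc_eq)
  moreover have "i \<notin> removed n" using assms unfolding removed_def by simp
  ultimately show ?thesis unfolding mass_def by (simp add: finite_removed)
qed

lemma mass_Suc_no_removal:
  assumes "n \<notin> c ` I"
  shows "mass (Suc n) = mass n"
proof -
  have "removed (Suc n) = removed n"
    using assms unfolding removed_def by (auto simp: less_Suc_eq)
  then show ?thesis unfolding mass_def by simp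
qed

lemma inj_on_p: "inj_on p I"
proof (rule inj_onI)
  fix i i' assume i: "i \<in> I" "i' \<in> I" "p i = p i'"
  have "\<not> c i < c i'" using separated[OF i(1,2)] w_pos[OF i(1)] i(3) by force
  moreover have "\<not> c i' < c i" using separated[OF i(2,1)] w_pos[OF i(2)] i(3) by force
  ultimately have "c i = c i'" by simp
  then show "i = i'" using inj_onD[OF inj_c] i by blast
qed

lemma compact_closure_points: "compact (closure points)"
proof -
  have "points \<subseteq> {0..11}" unfolding points_def using p_range by force
  then have "bounded points" by (rule bounded_subset[OF bounded_closed_interval])
  then show ?thesis by simp
qed

lemma zero_on_in_models_far:
  assumes "\<theta> \<in> {10..11}"
  shows "zero_on A \<in> models \<theta>"
proof -
  have "\<theta> \<noteq> p i" if "i \<in> I" for i using p_range[OF that] assms by auto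
  then show ?thesis unfolding models_def by blast
qed

lemma compact_parametrization: "compact_parametrization (closure points) models family"
  unfolding compact_parametrization_def family_def using compact_closure_points by auto

lemma family_zero_on: "f \<in> family \<Longrightarrow> \<exists>A. f = zero_on A"
  unfolding family_def models_def by auto

lemma far_in_consistent_set:
  assumes "consistent (zero_on A) D" "\<theta> \<in> {10..11}"
  shows "\<theta> \<in> consistent_set (closure points) models D"
proof -
  have "\<theta> \<in> closure points"
    using assms(2) unfolding points_def by (intro closure_subset[THEN subsetD]) simp
  with zero_on_in_models_far[OF assms(2)] assms(1)
  have "\<theta> \<in> {\<theta> \<in> closure points. \<exists>f\<in>models \<theta>. consistent f D}" by blast
  then show ?thesis unfolding consistent_set_def by (rule closure_subset[THEN subsetD])
qed

lemma select_eq: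
  assumes "consistent (zero_on A) D"
  shows "select D = wave (mass (card (zero_times D)))"
  using far_in_consistent_set[OF assms wave_range] unfolding select_def by simp

lemma is_selection: "is_selection (closure points) models select"
  unfolding is_selection_def
proof (intro allI impI)
  fix D assume "finite D \<and> consistent_set (closure points) models D \<noteq> {}"
  then have "\<exists>\<theta>. \<theta> \<in> consistent_set (closure points) models D" by blast
  from someI_ex[OF this] show "select D \<in> consistent_set (closure points) models D"
    unfolding select_def by simp
qed

lemma point_in_consistent_set:
  assumes "i \<in> I" "finite D" "consistent (zero_on A) D" "card (zero_times D) \<le> c i"
  shows "p i \<in> consistent_set (closure points) models D"
proof -
  have "finite (zero_times D) \<and> card (zero_times D) \<le> c i'" if "i' \<in> I" "p i = p i'" for i'
    using inj_onD[OF inj_on_p that(2) assms(1) that(1)] finite_zero_times[OF assms(2)] assms(4) by simp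
  then have "zero_on (zero_times D) \<in> models (p i)" unfolding models_def by blast
  moreover have "p i \<in> closure points"
    using assms(1) unfolding points_def by (intro closure_subset[THEN subsetD]) simp
  moreover have "consistent (zero_on (zero_times D)) D"
    by (rule consistent_zero_on_zero_times[OF assms(3)])
  ultimately have "p i \<in> {\<theta> \<in> closure points. \<exists>f\<in>models \<theta>. consistent f D}" by blast
  then show ?thesis unfolding consistent_set_def by (rule closure_subset[THEN subsetD])
qed


lemma consistent_set_subset_closure_unremoved:
  assumes "finite D"
  shows "consistent_set (closure points) models D \<subseteq> closure (points - p ` removed (card (zero_times D)))"
proof -
  define R where "R = p ` removed (card (zero_times D))"
  have "\<theta> \<notin> R" if "f \<in> models \<theta>" "consistent f D" for \<theta> f
  proof
    assume "\<theta> \<in> R"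
    then obtain i where i: "i \<in> I" "c i < card (zero_times D)" "\<theta> = p i"
      unfolding R_def removed_def by blast
    from that(1) obtain A where A: "f = zero_on A" "\<forall>i\<in>I. \<theta> = p i \<longrightarrow> finite A \<and> card A \<le> c i"
      unfolding models_def by blast
    have "card (zero_times D) \<le> card A"
      using A i that(2) by (intro card_mono zero_times_subset) auto
    with A i show False by force
  qed
  then have "{\<theta> \<in> closure points. \<exists>f\<in>models \<theta>. consistent f D} \<subseteq> closure points - R"
    by blast
  also have "closure points - R \<subseteq> closure (points - R)"
  proof -
    have "closed R" unfolding R_def by (intro finite_imp_closed finite_imageI finite_removed)
    then show ?thesis using closure_Un[of "points - R" R] closure_closed[of R] by auto
  qed
  finally show ?thesis unfolding consistent_set_def R_def by (simp add: closure_minimal)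
qed

lemma weight_le_dist_unremoved:
  assumes "i \<in> I" "x \<in> closure (points - p ` removed (Suc (c i)))"
  shows "w i \<le> dist (p i) x"
proof -
  have "points - p ` removed (Suc (c i)) \<subseteq> - ball (p i) (w i)"
  proof
    fix y assume y: "y \<in> points - p ` removed (Suc (c i))"
    have "w i \<le> dist (p i) y"
    proof (cases "y \<in> {10..11}")
      case True
      then show ?thesis using p_range[OF assms(1)] w_le_1[OF assms(1)] by (auto simp: dist_real_def)
    next
      case False
      with y obtain i' where i': "i' \<in> I" "y = p i'" unfolding points_def by blast
      with y have "i' \<notin> removed (Suc (c i))" by blast
      with i' have "c i < c i'" unfolding removed_def by simp
      with i' show ?thesis using separated[OF assms(1)] by simp
    qed
    then show "y \<in> - ball (p i) (w i)" by simp
  qed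
  then have "closure (points - p ` removed (Suc (c i))) \<subseteq> - ball (p i) (w i)"
    by (rule closure_minimal) auto
  then show ?thesis using assms(2) by auto
qed

lemma removal_step_hausdorff_dist:
  assumes "i \<in> I" "finite D'" "D \<subseteq> D'" "consistent (zero_on A) D'"
    and "card (zero_times D) = c i" "card (zero_times D') = Suc (c i)"
  shows "w i \<le> hausdorff_dist (consistent_set (closure points) models D')
                                (consistent_set (closure points) models D)"
proof -
  have "finite D" using assms(2,3) by (rule finite_subset[rotated])
  have "consistent (zero_on A) D" using assms(3,4) unfolding consistent_def by blast
  have "p i \<in> consistent_set (closure points) models D"
    using point_in_consistent_set[OF assms(1) \<open>finite D\<close> \<open>consistent (zero_on A) D\<close>] assms(5) by simp
  moreover have "consistent_set (closure points) models D \<subseteq> closure points"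
    by (rule consistent_set_subset[OF compact_closure_points])
  ultimately have "infdist (p i) (consistent_set (closure points) models D')
                     \<le> hausdorff_dist (consistent_set (closure points) models D')
                                      (consistent_set (closure points) models D)"
    using far_in_consistent_set[OF assms(4), of 10]
    by (intro hausdorff_dist_ge_infdist bounded_subset[OF compact_imp_bounded[OF compact_closure_points]]) auto
  moreover have "w i \<le> infdist (p i) (consistent_set (closure points) models D')"
  proof (rule infdist_ge)
    show "consistent_set (closure points) models D' \<noteq> {}"
      using far_in_consistent_set[OF assms(4), of 10] by auto
    show "w i \<le> dist (p i) x" if "x \<in> consistent_set (closure points) models D'" for x
      using weight_le_dist_unremoved[OF assms(1)] consistent_set_subset_closure_unremoved[OF assms(2)]
        that assms(6) by auto
  qed
  ultimately show ?thesis by linarith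
qed

lemma select_stream_step:
  assumes "admissible_stream family d"
  shows "dist (select (stream_data d (Suc t))) (select (stream_data d t))
           \<le> 2 * hausdorff_dist (consistent_set (closure points) models (stream_data d (Suc t)))
                                (consistent_set (closure points) models (stream_data d t))"
    (is "?dist \<le> 2 * ?h")
proof -
  obtain A where cons: "\<And>t. consistent (zero_on A) (stream_data d t)"
    using assms family_zero_on unfolding admissible_stream_def by blast
  define n where "n = card (zero_times (stream_data d t))"
  have select: "select (stream_data d t') = wave (mass (card (zero_times (stream_data d t'))))" for t'
    by (rule select_eq[OF cons])
  have "0 \<le> ?h"
    using consistent_sets_of_admissible_stream[OF compact_parametrization assms]
    by (intro hausdorff_dist_nonneg compact_imp_bounded) auto
  consider "card (zero_times (stream_data d (Suc t))) = n"
    | "card (zero_times (stream_data d (Suc t))) = Suc n" "n \<notin> c ` I"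
    | i where "i \<in> I" "c i = n" "card (zero_times (stream_data d (Suc t))) = Suc n"
    using card_zero_times_stream_data_Suc[of d t] by (cases "n \<in> c ` I") (auto simp: n_def)
  then show ?thesis
  proof cases
    case 1
    then show ?thesis using \<open>0 \<le> ?h\<close> unfolding select n_def by simp
  next
    case 2
    then show ?thesis using \<open>0 \<le> ?h\<close> mass_Suc_no_removal unfolding select n_def by simp
  next
    case (3 i)
    have "?dist = dist (wave (mass n + w i)) (wave (mass n))"
      by (simp only: select 3(3) n_def[symmetric] mass_Suc_removal[OF 3(1,2)])
    also have "\<dots> \<le> 2 * w i"
      using wave_lipschitz[of "mass n + w i" "mass n"] w_pos[OF 3(1)] by (simp add: dist_real_def)
    also have "w i \<le> ?h"
      by (rule removal_step_hausdorff_dist[OF 3(1) finite_stream_data stream_data_mono cons])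
        (use 3 in \<open>simp_all add: n_def\<close>)
    finally show ?thesis by simp
  qed
qed

lemma chase_D: "chase_D (closure points) models family select"
proof -
  have "competitive_ineq (closure points) models select 2 d t1 t2"
    if "admissible_stream family d" "t1 < t2 \<and> t2 - t1 \<le> 1" for d t1 t2
  proof -
    from that(2) have "t2 = Suc t1" by arith
    then show ?thesis unfolding competitive_ineq_iff using select_stream_step[OF that(1)] by simp
  qed
  then show ?thesis unfolding chase_D_def by blast
qed

lemma not_chase_A: "\<not> chase_A (closure points) models family select"
proof
  assume A: "chase_A (closure points) models family select"
  define d :: "nat \<Rightarrow> (real, real) datum" where "d t = (t, 0, 0, 0)" for t
  have cons: "consistent (zero_on UNIV) (stream_data d t)" for t
    unfolding consistent_def zero_on_def stream_data_def d_def by auto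
  have "zero_on UNIV \<in> family"
    unfolding family_def points_def using zero_on_in_models_far[of 10] closure_subset by fastforce
  with cons have "admissible_stream family d" unfolding admissible_stream_def by blast
  with A obtain L where "(\<lambda>t. select (stream_data d t)) \<longlonglongrightarrow> L"
    unfolding chase_A_def convergent_def by blast
  moreover have "zero_times (stream_data d t) = {1..t}" for t
    unfolding zero_times_def stream_data_def d_def by auto
  ultimately have "(\<lambda>t. wave (mass t)) \<longlonglongrightarrow> L"
    using select_eq[OF cons] by simp
  then obtain N where N: "\<And>n. N \<le> n \<Longrightarrow> dist (wave (mass n)) L < 1 / 2"
    unfolding lim_sequentially by (meson half_gt_zero zero_less_one)
  obtain n where n: "2 * N \<le> n" "mass n = real (2 * N)"
    using mass_hits_naturals unfolding mass_def removed_def by blast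
  obtain n' where n': "2 * N + 1 \<le> n'" "mass n' = real (2 * N + 1)"
    using mass_hits_naturals unfolding mass_def removed_def by blast
  have "wave (mass n) = 10" "wave (mass n') = 11"
    using n(2) n'(2) wave_of_nat[of "2 * N"] wave_of_nat[of "2 * N + 1"] by simp_all
  then have "dist 10 L < 1 / 2" "dist 11 L < 1 / 2" using N[of n] N[of n'] n(1) n'(1) by simp_all
  then show False unfolding dist_real_def by linarith
qed

lemma chase_B_D_not_A_C:
  "compact_parametrization (closure points) models family \<and> is_selection (closure points) models select
     \<and> chase_B (closure points) models family select \<and> chase_D (closure points) models family select
     \<and> \<not> chase_A (closure points) models family select \<and> \<not> chase_C (closure points) models family select"
  using compact_parametrization is_selection chase_D not_chase_A chase_D_imp_B[OF compact_parametrization chase_D]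
    chase_C_imp_A[OF compact_parametrization is_selection] by blast

end

section \<open>A dyadic removal schedule\<close>

lemma floorlog_2_bounds:
  assumes "1 \<le> a"
  shows "2 ^ (floorlog 2 a - 1) \<le> a" "a < 2 ^ floorlog 2 a" "1 \<le> floorlog 2 a"
  using floorlog_bounds[of a 2] floorlog_eq_zero_iff[of 2 a] assms by auto

lemma floorlog_2_eqI: "2 ^ m \<le> a \<Longrightarrow> a < 2 ^ Suc m \<Longrightarrow> floorlog 2 a = Suc m"
  using floorlog_ge_SucI[of 2 m a] floorlog_leI[of a 2 "Suc m"] by simp

\<comment> \<open>The odd dyadic fractions 1/2, 1/4, 3/4, 1/8, 3/8, ...; dyadic a has denominator
  2 ^ floorlog 2 a.\<close>
definition dyadic :: "nat \<Rightarrow> real" where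
  "dyadic a = (2 * real a + 1 - 2 ^ floorlog 2 a) / 2 ^ floorlog 2 a"

lemma dyadic_bounds:
  assumes "1 \<le> a"
  shows "1 / 2 ^ floorlog 2 a \<le> dyadic a" "dyadic a \<le> 1 - 1 / 2 ^ floorlog 2 a"
proof -
  define k where "k = floorlog 2 a"
  have "(2::real) ^ k = 2 * 2 ^ (k - 1)"
    using floorlog_2_bounds(3)[OF assms] unfolding k_def by (simp flip: power_Suc)
  moreover have "(2::real) ^ (k - 1) \<le> real a" "real a + 1 \<le> 2 ^ k"
    using floorlog_2_bounds(1,2)[OF assms] unfolding k_def
    by (metis of_nat_le_iff of_nat_numeral of_nat_power, metis Suc_leI of_nat_Suc of_nat_le_iff of_nat_numeral of_nat_power add.commute)
  ultimately have "1 \<le> 2 * real a + 1 - 2 ^ k" "2 * real a + 1 - 2 ^ k \<le> 2 ^ k - 1" by linarith+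
  then have "1 / 2 ^ k \<le> dyadic a" "dyadic a \<le> (2 ^ k - 1) / 2 ^ k"
    unfolding dyadic_def k_def[symmetric] by (intro divide_right_mono; simp)+
  then show "1 / 2 ^ k \<le> dyadic a" "dyadic a \<le> 1 - 1 / 2 ^ k"
    by (simp_all add: diff_divide_distrib)
qed

\<comment> \<open>Over the denominator 2 ^ floorlog 2 a, the numerator of dyadic a is odd while that of
  dyadic b is even or, if b has the same denominator, different.\<close>
lemma dyadic_separated:
  assumes "b < a"
  shows "1 / 2 ^ floorlog 2 a \<le> \<bar>dyadic a - dyadic b\<bar>"
proof -
  define k where "k = floorlog 2 a"
  define k' where "k' = floorlog 2 b"
  have "1 \<le> k" unfolding k_def using floorlog_2_bounds(3)[of a] assms by simp
  have "k' \<le> k" unfolding k_def k'_def using assms by (intro floorlog_mono) simp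
  define N :: int where "N = 2 * int a + 1 - 2 ^ k"
  define N' :: int where "N' = (2 * int b + 1 - 2 ^ k') * 2 ^ (k - k')"
  have a: "dyadic a = of_int N / 2 ^ k" unfolding dyadic_def N_def k_def by simp
  have "(2::real) ^ k = 2 ^ k' * 2 ^ (k - k')" using \<open>k' \<le> k\<close> by (simp flip: power_add)
  then have b: "dyadic b = of_int N' / 2 ^ k" unfolding dyadic_def N'_def k'_def by simp
  have "N \<noteq> N'"
  proof (cases "k' = k")
    case True
    then show ?thesis unfolding N_def N'_def using assms by simp
  next
    case False
    then have "even N'" using \<open>k' \<le> k\<close> unfolding N'_def by simp
    moreover have "odd N" using \<open>1 \<le> k\<close> unfolding N_def by simp
    ultimately show ?thesis by auto
  qed
  then have "1 \<le> \<bar>of_int N - of_int N' :: real\<bar>" by linarith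
  then have "1 / 2 ^ k \<le> \<bar>of_int N - of_int N' :: real\<bar> / 2 ^ k" by (simp add: divide_right_mono)
  also have "\<dots> = \<bar>dyadic a - dyadic b\<bar>" unfolding a b by (simp flip: diff_divide_distrib)
  finally show ?thesis unfolding k_def .
qed

lemma sum_inverse_power_floorlog_2:
  "(\<Sum>a\<in>{1..<2 ^ m}. 1 / 2 ^ floorlog 2 a :: real) = m / 2"
proof (induction m)
  case (Suc m)
  have "(\<Sum>a\<in>{1..<2 ^ Suc m}. 1 / 2 ^ floorlog 2 a :: real) =
        (\<Sum>a\<in>{1..<2 ^ m}. 1 / 2 ^ floorlog 2 a) + (\<Sum>a\<in>{2 ^ m..<2 ^ Suc m}. 1 / 2 ^ floorlog 2 a)"
    by (rule sum.atLeastLessThan_concat[symmetric]) auto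
  also have "(\<Sum>a\<in>{2 ^ m..<2 ^ Suc m}. 1 / 2 ^ floorlog 2 a :: real) = (\<Sum>a\<in>{(2::nat) ^ m..<2 ^ Suc m}. 1 / 2 ^ Suc m)"
    by (rule sum.cong) (auto simp: floorlog_2_eqI)
  also have "\<dots> = 1 / 2" by (simp add: field_simps)
  finally show ?case using Suc.IH by simp
qed simp

text \<open>
  Block j consists of the points block_point j a in [1/2^j, 3/2^(j+1)] for 1 <= a < block_size j,
  removed at the times block_time j a between block_size j and 2 block_size j, finest first.
  Its total weight is 1 (block_weight_sum), which is what the block size 2 ^ 2 ^ (j + 2) is for.
\<close>

definition block_size :: "nat \<Rightarrow> nat" where
  "block_size j = 2 ^ 2 ^ (j + 2)"

definition block_point :: "nat \<Rightarrow> nat \<Rightarrow> real" where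
  "block_point j a = (2 + dyadic a) / 2 ^ (j + 1)"

definition block_weight :: "nat \<Rightarrow> nat \<Rightarrow> real" where
  "block_weight j a = 1 / 2 ^ (j + 1 + floorlog 2 a)"

definition block_time :: "nat \<Rightarrow> nat \<Rightarrow> nat" where
  "block_time j a = 2 * block_size j - a"

lemma block_size_ge_2: "2 \<le> block_size j"
  unfolding block_size_def using one_le_power[of 2 "2 ^ (j + 2)"] power_increasing[of 1 "2 ^ (j + 2)" "2::nat"]
  by simp

lemma double_block_size_le_Suc: "2 * block_size j \<le> block_size (Suc j)"
proof -
  have "block_size (Suc j) = block_size j * block_size j"
    unfolding block_size_def by (simp flip: power_add add: mult_2)
  then show ?thesis using block_size_ge_2[of j] by simp
qed

lemma block_size_mono: "j \<le> j' \<Longrightarrow> block_size j \<le> block_size j'"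
  unfolding block_size_def by (intro power_increasing) auto

lemma less_block_size: "j < block_size j"
proof -
  have "j < 2 ^ (j + 2)" by (rule less_le_trans[OF less_exp]) simp
  also have "\<dots> < block_size j" unfolding block_size_def by (rule less_exp)
  finally show ?thesis .
qed

lemma block_time_less:
  assumes "j < j'" "a' < block_size j'"
  shows "block_time j a < block_time j' a'"
proof -
  have "2 * block_size j \<le> block_size j'"
    using double_block_size_le_Suc[of j] block_size_mono[of "Suc j" j'] assms(1) by simp
  then show ?thesis unfolding block_time_def using assms(2) by simp
qed

lemma block_time_less_iff:
  assumes "a < block_size j" "a' < block_size j'"
  shows "block_time j a < block_time j' a' \<longleftrightarrow> j < j' \<or> j = j' \<and> a' < a"
  using block_time_less[OF _ assms(2), of j a] block_time_less[OF _ assms(1), of j' a'] assms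
  unfolding block_time_def by (cases j j' rule: linorder_cases) auto

lemma block_weight_sum: "(\<Sum>a\<in>{1..<block_size j}. block_weight j a) = 1"
proof -
  have "(\<Sum>a\<in>{1..<block_size j}. block_weight j a)
          = (\<Sum>a\<in>{1..<2 ^ 2 ^ (j + 2)}. 1 / 2 ^ floorlog 2 a) / 2 ^ (j + 1)"
    unfolding block_weight_def block_size_def by (simp add: power_add sum_divide_distrib ac_simps)
  also have "\<dots> = 1" unfolding sum_inverse_power_floorlog_2 by simp
  finally show ?thesis .
qed

lemma block_point_lower:
  assumes "1 \<le> a"
  shows "1 / 2 ^ j + block_weight j a \<le> block_point j a"
  using divide_right_mono[OF dyadic_bounds(1)[OF assms], of "2 ^ (j + 1)"]
  unfolding block_point_def block_weight_def by (simp add: power_add field_simps)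

lemma block_point_upper:
  assumes "1 \<le> a"
  shows "block_point j a \<le> 3 / 2 ^ (j + 1)"
proof -
  have "dyadic a \<le> 1" using dyadic_bounds(2)[OF assms] by (smt (verit) divide_nonneg_nonneg zero_le_power)
  then show ?thesis unfolding block_point_def by (intro divide_right_mono) auto
qed

lemma block_weight_le: "block_weight j a \<le> 1"
proof -
  have "1 \<le> (2::real) ^ (j + 1 + floorlog 2 a)" by (rule one_le_power) simp
  then show ?thesis unfolding block_weight_def by simp
qed

lemma block_point_range:
  assumes "1 \<le> a"
  shows "block_point j a \<in> {0..2}"
proof -
  have "(2::real) ^ 1 \<le> 2 ^ (j + 1)" by (rule power_increasing) simp_all
  then have "(3::real) / 2 ^ (j + 1) \<le> 3 / 2" by (intro divide_left_mono) auto
  moreover have "0 \<le> 1 / 2 ^ j + block_weight j a" unfolding block_weight_def by simp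
  ultimately show ?thesis
    using block_point_lower[OF assms, of j] block_point_upper[OF assms, of j]
    unfolding atLeastAtMost_iff by linarith
qed

lemma block_points_separated:
  assumes "1 \<le> a" "1 \<le> a'" "j < j' \<or> j = j' \<and> a' < a"
  shows "block_weight j a \<le> dist (block_point j a) (block_point j' a')"
  using assms(3)
proof
  assume "j < j'"
  then have "(2::real) ^ (j + 2) \<le> 2 ^ (j' + 1)" by (intro power_increasing) auto
  have "block_point j' a' \<le> 3 / 2 ^ (j' + 1)" by (rule block_point_upper[OF assms(2)])
  also have "\<dots> \<le> 3 / 2 ^ (j + 2)"
    using \<open>(2::real) ^ (j + 2) \<le> 2 ^ (j' + 1)\<close> by (intro divide_left_mono) auto
  also have "\<dots> \<le> 1 / 2 ^ j" by (simp add: power_add field_simps)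
  finally have "block_point j' a' \<le> 1 / 2 ^ j" .
  then show ?thesis using block_point_lower[OF assms(1), of j] by (simp add: dist_real_def)
next
  assume "j = j' \<and> a' < a"
  then have "block_weight j a = 1 / 2 ^ floorlog 2 a / 2 ^ (j + 1)"
    unfolding block_weight_def by (simp add: power_add)
  also have "\<dots> \<le> \<bar>dyadic a - dyadic a'\<bar> / 2 ^ (j + 1)"
    using dyadic_separated[of a' a] \<open>j = j' \<and> a' < a\<close> by (intro divide_right_mono) auto
  also have "\<dots> = dist (block_point j a) (block_point j' a')"
    using \<open>j = j' \<and> a' < a\<close> unfolding block_point_def dist_real_def
    by (simp add: abs_divide flip: diff_divide_distrib)
  finally show ?thesis .
qed

lemma removed_blocks:
  "{i \<in> (SIGMA j:UNIV. {1..<block_size j}). (\<lambda>(j, a). block_time j a) i < 2 * block_size J}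
     = (SIGMA j:{..J}. {1..<block_size j})"
proof (intro set_eqI iffI)
  fix i assume i: "i \<in> {i \<in> (SIGMA j:UNIV. {1..<block_size j}). (\<lambda>(j, a). block_time j a) i < 2 * block_size J}"
  then obtain j a where ja: "i = (j, a)" "1 \<le> a" "a < block_size j" "block_time j a < block_time J 0"
    unfolding block_time_def by auto
  have "j \<le> J"
  proof (rule ccontr)
    assume "\<not> j \<le> J"
    then have "block_time J 0 < block_time j a" using ja(3) by (intro block_time_less) auto
    with ja(4) show False by simp
  qed
  with ja show "i \<in> (SIGMA j:{..J}. {1..<block_size j})" by simp
next
  fix i assume "i \<in> (SIGMA j:{..J}. {1..<block_size j})"
  then obtain j a where "i = (j, a)" "j \<le> J" "1 \<le> a" "a < block_size j" by auto
  moreover have "block_size j \<le> block_size J" using \<open>j \<le> J\<close> by (rule block_size_mono)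
  ultimately show "i \<in> {i \<in> (SIGMA j:UNIV. {1..<block_size j}). (\<lambda>(j, a). block_time j a) i < 2 * block_size J}"
    unfolding block_time_def by auto
qed

interpretation dyadic_schedule: removal_schedule "SIGMA j:UNIV. {1..<block_size j}"
  "\<lambda>(j, a). block_point j a" "\<lambda>(j, a). block_weight j a" "\<lambda>(j, a). block_time j a"
proof
  show "inj_on (\<lambda>(j, a). block_time j a) (SIGMA j:UNIV. {1..<block_size j})"
  proof (rule inj_onI)
    fix i i' assume "i \<in> (SIGMA j:UNIV. {1..<block_size j})" "i' \<in> (SIGMA j:UNIV. {1..<block_size j})"
      and eq: "(\<lambda>(j, a). block_time j a) i = (\<lambda>(j, a). block_time j a) i'"
    then obtain j a j' a' where "i = (j, a)" "i' = (j', a')" "a < block_size j" "a' < block_size j'"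
      by auto
    then show "i = i'"
      using eq block_time_less_iff[of a j a' j'] block_time_less_iff[of a' j' a j] by auto
  qed
next
  fix i assume "i \<in> (SIGMA j:UNIV. {1..<block_size j})"
  then obtain j a where i: "i = (j, a)" "1 \<le> a" "a < block_size j" by auto
  show "0 < (\<lambda>(j, a). block_weight j a) i" unfolding i block_weight_def by simp
  show "(\<lambda>(j, a). block_weight j a) i \<le> 1" unfolding i by (simp add: block_weight_le)
  show "(\<lambda>(j, a). block_point j a) i \<in> {0..2}" unfolding i using block_point_range[OF i(2)] by simp
next
  fix i i' assume "i \<in> (SIGMA j:UNIV. {1..<block_size j})" "i' \<in> (SIGMA j:UNIV. {1..<block_size j})"
    and "(\<lambda>(j, a). block_time j a) i < (\<lambda>(j, a). block_time j a) i'"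
  then show "(\<lambda>(j, a). block_weight j a) i \<le> dist ((\<lambda>(j, a). block_point j a) i) ((\<lambda>(j, a). block_point j a) i')"
    using block_time_less_iff block_points_separated by auto
next
  fix k
  show "\<exists>n\<ge>k. (\<Sum>i | i \<in> (SIGMA j:UNIV. {1..<block_size j}) \<and> (\<lambda>(j, a). block_time j a) i < n.
                 (\<lambda>(j, a). block_weight j a) i) = real k"
  proof (cases k)
    case 0
    then show ?thesis by (intro exI[of _ 0]) simp
  next
    case (Suc J)
    have "(\<Sum>i | i \<in> (SIGMA j:UNIV. {1..<block_size j}) \<and> (\<lambda>(j, a). block_time j a) i < 2 * block_size J.
             (\<lambda>(j, a). block_weight j a) i)
           = (\<Sum>j\<le>J. \<Sum>a\<in>{1..<block_size j}. block_weight j a)"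
      using removed_blocks[of J] by (simp add: sum.Sigma)
    also have "\<dots> = real k" unfolding block_weight_sum Suc by simp
    finally show ?thesis
      using less_block_size[of J] unfolding Suc by (intro exI[of _ "2 * block_size J"]) auto
  qed
qed

lemma exists_selection_B_D_not_A_C:
  "\<exists>(K::real set) (T::real \<Rightarrow> (real,real) dynfun set) F SEL.
     compact_parametrization K T F \<and> is_selection K T SEL \<and>
     chase_B K T F SEL \<and> chase_D K T F SEL \<and> \<not> chase_A K T F SEL \<and> \<not> chase_C K T F SEL"
  using dyadic_schedule.chase_B_D_not_A_C by blast

lemma chasing_implications:
  assumes "compact_parametrization K T F" "is_selection K T SEL"
  shows "(chase_C K T F SEL \<longrightarrow> chase_A K T F SEL) \<and> (chase_C K T F SEL \<longrightarrow> chase_D K T F SEL) \<and>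
         (chase_A K T F SEL \<longrightarrow> chase_B K T F SEL) \<and> (chase_D K T F SEL \<longrightarrow> chase_B K T F SEL)"
  using chase_C_imp_A[OF assms] chase_C_imp_D[of K T F SEL] chase_A_imp_B[of K T F SEL]
    chase_D_imp_B[OF assms(1)] by blast

lemma chasing_non_implications:
  "(\<forall>(X, Y) \<in> {(chase_A, chase_C), (chase_A, chase_D),
                (chase_B, chase_A), (chase_B, chase_C), (chase_B, chase_D),
                (chase_D, chase_A), (chase_D, chase_C)}.
       \<exists>(K::real set) (T::real \<Rightarrow> (real,real) dynfun set) F SEL.
         compact_parametrization K T F \<and> is_selection K T SEL \<and>
         X K T F SEL \<and> \<not> Y K T F SEL)"
proof -
  obtain K\<^sub>1 :: "real set" and T\<^sub>1 :: "real \<Rightarrow> (real,real) dynfun set" and F\<^sub>1 SEL\<^sub>1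
    where ex\<^sub>1: "compact_parametrization K\<^sub>1 T\<^sub>1 F\<^sub>1" "is_selection K\<^sub>1 T\<^sub>1 SEL\<^sub>1"
      "chase_A K\<^sub>1 T\<^sub>1 F\<^sub>1 SEL\<^sub>1" "chase_B K\<^sub>1 T\<^sub>1 F\<^sub>1 SEL\<^sub>1"
      "\<not> chase_C K\<^sub>1 T\<^sub>1 F\<^sub>1 SEL\<^sub>1" "\<not> chase_D K\<^sub>1 T\<^sub>1 F\<^sub>1 SEL\<^sub>1"
    using exists_selection_A_B_not_C_D by blast
  obtain K\<^sub>2 :: "real set" and T\<^sub>2 :: "real \<Rightarrow> (real,real) dynfun set" and F\<^sub>2 SEL\<^sub>2
    where ex\<^sub>2: "compact_parametrization K\<^sub>2 T\<^sub>2 F\<^sub>2" "is_selection K\<^sub>2 T\<^sub>2 SEL\<^sub>2"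
      "chase_B K\<^sub>2 T\<^sub>2 F\<^sub>2 SEL\<^sub>2" "chase_D K\<^sub>2 T\<^sub>2 F\<^sub>2 SEL\<^sub>2"
      "\<not> chase_A K\<^sub>2 T\<^sub>2 F\<^sub>2 SEL\<^sub>2" "\<not> chase_C K\<^sub>2 T\<^sub>2 F\<^sub>2 SEL\<^sub>2"
    using exists_selection_B_D_not_A_C by blast
  have witness: "\<exists>(K::real set) (T::real \<Rightarrow> (real,real) dynfun set) F SEL.
      compact_parametrization K T F \<and> is_selection K T SEL \<and> X K T F SEL \<and> \<not> Y K T F SEL"
    if "X K\<^sub>1 T\<^sub>1 F\<^sub>1 SEL\<^sub>1 \<and> \<not> Y K\<^sub>1 T\<^sub>1 F\<^sub>1 SEL\<^sub>1 \<or> X K\<^sub>2 T\<^sub>2 F\<^sub>2 SEL\<^sub>2 \<and> \<not> Y K\<^sub>2 T\<^sub>2 F\<^sub>2 SEL\<^sub>2" for X Y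
    using that ex\<^sub>1 ex\<^sub>2 by blast
  show ?thesis using ex\<^sub>1 ex\<^sub>2 by (auto intro!: witness)
qed

theorem corollary1:
  shows "(\<forall>(K::'k::metric_space set) (T::'k \<Rightarrow> ('x,'u) dynfun set) F SEL.
            compact_parametrization K T F \<and> is_selection K T SEL \<longrightarrow>
              (chase_C K T F SEL \<longrightarrow> chase_A K T F SEL) \<and>
              (chase_C K T F SEL \<longrightarrow> chase_D K T F SEL) \<and>
              (chase_A K T F SEL \<longrightarrow> chase_B K T F SEL) \<and>
              (chase_D K T F SEL \<longrightarrow> chase_B K T F SEL))
       \<and> (\<forall>(X, Y) \<in> {(chase_A, chase_C), (chase_A, chase_D),
                     (chase_B, chase_A), (chase_B, chase_C), (chase_B, chase_D),
                     (chase_D, chase_A), (chase_D, chase_C)}.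
            \<exists>(K::real set) (T::real \<Rightarrow> (real,real) dynfun set) F SEL.
              compact_parametrization K T F \<and> is_selection K T SEL \<and>
              X K T F SEL \<and> \<not> Y K T F SEL)"
  by (intro conjI[OF _ chasing_non_implications] allI impI, elim conjE, rule chasing_implications)

end
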